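(* Let $\Gamma$ be a compact abelian group such that for every $a\in\mathbb{N}^{\times}$ the subgroup $\omega_a(\Gamma)$ has finite index in $\Gamma$ and $\ker\omega_a$ is finite, where $\omega_a:\Gamma\to\Gamma$ is $\omega_a(g)=g^a$. Then each $\omega_a$ is a proper local homeomorphism.
   Context: $\mathbb{N}^{\times}$ denotes the set of positive integers; $\Gamma$ is written multiplicatively and is Hausdorff. *)

theory Defs
  imports "HOL-Analysis.Analysis" "HOL-Algebra.Algebra"
begin

definition topological_group :: "('a, 'b) monoid_scheme \<Rightarrow> 'a topology \<Rightarrow> bool" where
  "topological_group G T \<longleftrightarrow>
     group G \<and> topspace T = carrier G \<and>
     continuous_map (prod_topology T T) T (\<lambda>p. mult G (fst p) (snd p)) \<and>
     continuous_map T T (\<lambda>x. m_inv G x)"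

definition omega :: "('a, 'b) monoid_scheme \<Rightarrow> nat \<Rightarrow> 'a \<Rightarrow> 'a" where
  "omega G a = (\<lambda>g. pow G g a)"

definition local_homeomorphism_map :: "'a topology \<Rightarrow> 'b topology \<Rightarrow> ('a \<Rightarrow> 'b) \<Rightarrow> bool" where
  "local_homeomorphism_map T S f \<longleftrightarrow>
     continuous_map T S f \<and>
     (\<forall>x \<in> topspace T. \<exists>U. openin T U \<and> x \<in> U \<and> openin S (f ` U) \<and>
        homeomorphic_map (subtopology T U) (subtopology S (f ` U)) f)"

end

theory Submission
  imports Defs
begin

text \<open>The image H of the power map is compact, hence closed, and has finitely many cosets, each a
  translate of H; so H is also open, being the complement of the finitely many other cosets.
  Since the power map is a closed homomorphism with open image, it is open: f(U) is the
  complement in H of the image of the closed set outside U K, K the kernel. Finally, a neighbourhood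
  U of g with U U\<inverse> disjoint from the finite set K - {1} makes f injective on U, and a
  continuous open injection is a homeomorphism onto its image.\<close>

locale topological_group_on = group G for G :: "('a, 'b) monoid_scheme" (structure) +
  fixes T :: "'a topology"
  assumes topological_group: "topological_group G T"
begin

lemma topspace_eq: "topspace T = carrier G"
  using topological_group unfolding topological_group_def by blast

lemma continuous_map_mult: "continuous_map (prod_topology T T) T (\<lambda>p. fst p \<otimes> snd p)"
  using topological_group unfolding topological_group_def by blast

lemma continuous_map_inv: "continuous_map T T (\<lambda>x. inv x)"
  using topological_group unfolding topological_group_def by blast

lemma continuous_map_pow: "continuous_map T T (\<lambda>x. x [^] (n::nat))"
proof (induction n)
  case 0
  then show ?case by (simp add: topspace_eq)
next
  case (Suc n)
  have "continuous_map T T ((\<lambda>p. fst p \<otimes> snd p) \<circ> (\<lambda>x. (x [^] n, x)))"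
    by (intro continuous_map_compose[OF _ continuous_map_mult] continuous_map_pairedI Suc
        continuous_map_id[unfolded id_def])
  then show ?case by (rule continuous_map_eq) (simp add: topspace_eq)
qed

lemma continuous_map_mult_right:
  assumes "c \<in> carrier G"
  shows "continuous_map T T (\<lambda>x. x \<otimes> c)"
proof -
  have "continuous_map T T ((\<lambda>p. fst p \<otimes> snd p) \<circ> (\<lambda>x. (x, c)))"
    using assms by (intro continuous_map_compose[OF _ continuous_map_mult] continuous_map_pairedI
        continuous_map_id[unfolded id_def]) (auto simp: topspace_eq)
  then show ?thesis by (simp add: o_def)
qed

lemma continuous_map_div: "continuous_map (prod_topology T T) T (\<lambda>p. fst p \<otimes> inv (snd p))"
proof -
  have "continuous_map (prod_topology T T) T
          ((\<lambda>p. fst p \<otimes> snd p) \<circ> (\<lambda>p. (fst p, inv (snd p))))"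
    by (intro continuous_map_compose[OF _ continuous_map_mult] continuous_map_pairedI
        continuous_map_fst continuous_map_compose[OF continuous_map_snd continuous_map_inv, unfolded o_def])
  then show ?thesis by (simp add: o_def)
qed

lemma closedin_rcos:
  assumes "closedin T H" "H \<subseteq> carrier G" "x \<in> carrier G"
  shows "closedin T (H #> x)"
proof -
  have "H #> x = {y \<in> topspace T. y \<otimes> inv x \<in> H}"
    using assms(2,3) by (force simp: r_coset_def topspace_eq m_assoc)
  then show ?thesis
    using closedin_continuous_map_preimage[OF continuous_map_mult_right assms(1)] assms(3) by simp
qed

lemma openin_closed_subgroup_finite_index:
  assumes "subgroup H G" "closedin T H" "finite (rcosets H)"
  shows "openin T H"
proof -
  let ?others = "{R \<in> rcosets H. R \<noteq> H}"
  have H_rcos: "H \<in> rcosets H"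
    using rcosetsI[OF subgroup.subset[OF assms(1)] one_closed] coset_mult_one[OF subgroup.subset[OF assms(1)]]
    by simp
  have "finite ?others" using assms(3) by simp
  moreover have "closedin T R" if "R \<in> ?others" for R
    using that assms(2) subgroup.subset[OF assms(1)] by (auto simp: RCOSETS_def intro: closedin_rcos)
  ultimately have "closedin T (\<Union>?others)" by (rule closedin_Union)
  moreover have "H = topspace T - \<Union>?others"
  proof (intro equalityI subsetI)
    fix x assume "x \<in> H"
    moreover have "disjnt H R" if "R \<in> ?others" for R
      using rcos_disjoint[OF assms(1)] H_rcos that unfolding pairwise_def by blast
    ultimately show "x \<in> topspace T - \<Union>?others"
      using subgroup.subset[OF assms(1)] by (auto simp: topspace_eq disjnt_def)
  next
    fix x assume x: "x \<in> topspace T - \<Union>?others"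
    then have "x \<in> H #> x" "H #> x \<in> rcosets H"
      using rcos_self[OF _ assms(1)] rcosetsI[OF subgroup.subset[OF assms(1)]] by (auto simp: topspace_eq)
    with x show "x \<in> H" by blast
  qed
  ultimately show ?thesis by (metis openin_diff openin_topspace)
qed

lemma open_map_closed_hom:
  assumes f: "f \<in> hom G G" and closed: "closed_map T T f" and open_img: "openin T (f ` carrier G)"
  shows "open_map T T f"
  unfolding open_map_def
proof (intro allI impI)
  interpret group_hom G G f by (simp add: group_hom_def group_hom_axioms_def f is_group)
  fix U assume U: "openin T U"
  have U_carrier: "U \<subseteq> carrier G" using openin_subset[OF U] topspace_eq by simp
  define P where "P = {x \<in> carrier G. f x \<in> f ` U}"
  have "P = (\<Union>k\<in>kernel G G f. {x \<in> topspace T. x \<otimes> inv k \<in> U})"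
  proof (intro equalityI subsetI)
    fix x assume "x \<in> P"
    then obtain u where u: "u \<in> U" "f x = f u" "x \<in> carrier G" unfolding P_def by auto
    then have u_carrier: "u \<in> carrier G" using U_carrier by auto
    have "inv u \<otimes> x \<in> kernel G G f"
      using u u_carrier by (simp add: kernel_def)
    moreover have "x \<otimes> inv (inv u \<otimes> x) = u"
      using u(3) u_carrier by (simp add: inv_mult_group m_assoc[symmetric])
    ultimately show "x \<in> (\<Union>k\<in>kernel G G f. {x \<in> topspace T. x \<otimes> inv k \<in> U})"
      using u topspace_eq by force
  next
    fix x assume "x \<in> (\<Union>k\<in>kernel G G f. {x \<in> topspace T. x \<otimes> inv k \<in> U})"
    then obtain k where k: "k \<in> carrier G" "f k = \<one>" "x \<in> carrier G" "x \<otimes> inv k \<in> U"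
      by (auto simp: kernel_def topspace_eq)
    then have "f (x \<otimes> inv k) = f x" by simp
    then show "x \<in> P" using k unfolding P_def by (metis (mono_tags, lifting) image_eqI mem_Collect_eq)
  qed
  moreover have "openin T {x \<in> topspace T. x \<otimes> inv k \<in> U}" if "k \<in> kernel G G f" for k
    using that by (intro openin_continuous_map_preimage[OF continuous_map_mult_right U])
      (auto simp: kernel_def)
  ultimately have "openin T P" by auto
  then have "closedin T (f ` (carrier G - P))"
    using closed unfolding closed_map_def by (metis closedin_diff closedin_topspace topspace_eq)
  moreover have "f ` U = f ` carrier G - f ` (carrier G - P)"
    unfolding P_def using U_carrier by (auto, metis image_eqI)
  ultimately show "openin T (f ` U)" using open_img by (simp add: openin_diff)
qed

lemma locally_injective_hom_finite_kernel:
  assumes f: "f \<in> hom G G" and t1: "t1_space T" and fin: "finite (kernel G G f)"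
    and g: "g \<in> carrier G"
  obtains U where "openin T U" "g \<in> U" "inj_on f U"
proof -
  interpret group_hom G G f by (simp add: group_hom_def group_hom_axioms_def f is_group)
  let ?K = "kernel G G f"
  define S where "S = {p \<in> topspace (prod_topology T T). fst p \<otimes> inv (snd p) \<in> topspace T - (?K - {\<one>})}"
  have "closedin T (?K - {\<one>})"
    using t1 fin unfolding t1_space_closedin_finite by (simp add: kernel_def topspace_eq subset_eq)
  then have "openin T (topspace T - (?K - {\<one>}))" by (simp add: openin_diff)
  then have S_open: "openin (prod_topology T T) S"
    unfolding S_def by (rule openin_continuous_map_preimage[OF continuous_map_div])
  have "(g, g) \<in> S" using g by (simp add: S_def topspace_eq)
  with S_open have "\<exists>U V. openin T U \<and> openin T V \<and> g \<in> U \<and> g \<in> V \<and> U \<times> V \<subseteq> S"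
    by (rule openin_prod_topology_alt[THEN iffD1, rule_format])
  then obtain W1 W2 where W: "openin T W1" "openin T W2" "g \<in> W1" "g \<in> W2" "W1 \<times> W2 \<subseteq> S"
    by blast
  have W_div: "x \<otimes> inv y \<notin> ?K - {\<one>}" if "x \<in> W1" "y \<in> W2" for x y
    using subsetD[OF W(5), of "(x, y)"] that unfolding S_def by simp
  have "inj_on f (W1 \<inter> W2)"
  proof (rule inj_onI)
    fix x y assume xy: "x \<in> W1 \<inter> W2" "y \<in> W1 \<inter> W2" "f x = f y"
    then have carrier: "x \<in> carrier G" "y \<in> carrier G"
      using openin_subset[OF W(1)] topspace_eq by auto
    then have "x \<otimes> inv y \<in> ?K" using xy(3) by (simp add: kernel_def)
    with W_div[of x y] xy(1,2) have "x \<otimes> inv y = \<one>" by blast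
    then show "x = y" using inv_solve_right'[of \<one> x y] carrier by simp
  qed
  then show ?thesis using that W by blast
qed

end

lemma local_homeomorphism_map_if_locally_injective:
  assumes cont: "continuous_map T S f" and op: "open_map T S f"
    and loc_inj: "\<And>x. x \<in> topspace T \<Longrightarrow> \<exists>U. openin T U \<and> x \<in> U \<and> inj_on f U"
  shows "local_homeomorphism_map T S f"
  unfolding local_homeomorphism_map_def
proof (intro conjI cont ballI)
  fix x assume "x \<in> topspace T"
  then obtain U where U: "openin T U" "x \<in> U" "inj_on f U" using loc_inj by blast
  have U_top: "topspace (subtopology T U) = U"
    using openin_subset[OF U(1)] by (simp add: Int_absorb1)
  have fU: "openin S (f ` U)" using op U(1) unfolding open_map_def by blast
  have fU_top: "topspace (subtopology S (f ` U)) = f ` U"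
    using openin_subset[OF fU] by (simp add: Int_absorb1)
  have maps: "f \<in> topspace (subtopology T U) \<rightarrow> f ` U" unfolding U_top by blast
  have "homeomorphic_map (subtopology T U) (subtopology S (f ` U)) f"
    by (rule bijective_open_imp_homeomorphic_map)
      (use U U_top fU_top maps in \<open>auto intro: continuous_map_into_subtopology continuous_map_from_subtopology[OF cont]
        open_map_into_subtopology open_map_from_subtopology[OF op]\<close>)
  then show "\<exists>U. openin T U \<and> x \<in> U \<and> openin S (f ` U) \<and>
      homeomorphic_map (subtopology T U) (subtopology S (f ` U)) f"
    using U fU by blast
qed

lemma (in comm_group) omega_hom: "omega G a \<in> hom G G"
  by (auto intro!: homI simp: omega_def nat_pow_distrib)

theorem lemma3p3:
  fixes G :: "('a, 'b) monoid_scheme" and T :: "'a topology"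
  assumes "topological_group G T"
    and "comm_group G"
    and "compact_space T"
    and "Hausdorff_space T"
    and "\<And>a::nat. a \<ge> 1 \<Longrightarrow> finite (rcosets\<^bsub>G\<^esub> (omega G a ` carrier G))"
    and "\<And>a::nat. a \<ge> 1 \<Longrightarrow> finite (kernel G G (omega G a))"
  shows "\<And>a::nat. a \<ge> 1 \<Longrightarrow>
           proper_map T T (omega G a) \<and> local_homeomorphism_map T T (omega G a)"
proof -
  fix a :: nat
  assume a: "a \<ge> 1"
  interpret comm_group G by (rule assms(2))
  interpret topological_group_on G T by unfold_locales (rule assms(1))
  let ?f = "omega G a"
  have cont: "continuous_map T T ?f"
    using continuous_map_pow[of a] by (simp add: omega_def)
  have t1: "t1_space T" using assms(4) by (rule Hausdorff_imp_t1_space)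
  have closed: "closed_map T T ?f" using continuous_imp_closed_map cont assms(3,4) by blast
  have "subgroup (?f ` carrier G) G"
    by (rule group_hom.img_is_subgroup) (simp add: group_hom_def group_hom_axioms_def is_group omega_hom)
  moreover have "closedin T (?f ` carrier G)"
    using compactin_imp_closedin[OF assms(4) image_compactin[OF assms(3)[unfolded compact_space_def] cont]]
    by (simp add: topspace_eq)
  ultimately have "openin T (?f ` carrier G)"
    using openin_closed_subgroup_finite_index assms(5)[OF a] by blast
  then have "open_map T T ?f" using open_map_closed_hom[OF omega_hom closed] by blast
  moreover have "\<exists>U. openin T U \<and> x \<in> U \<and> inj_on ?f U" if "x \<in> topspace T" for x
    using locally_injective_hom_finite_kernel[OF omega_hom t1 assms(6)[OF a]] that topspace_eq by metis
  ultimately show "proper_map T T ?f \<and> local_homeomorphism_map T T ?f"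
    using continuous_closed_imp_proper_map[OF assms(3) t1 cont closed]
      local_homeomorphism_map_if_locally_injective[OF cont] by blast
qed

end
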